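(* Consider a Bayesian network with source $X$ as in the context, and let $W$ be a node and $V$ a set of nodes with $W\notin V$, $W\ne X$ and $W>v$ for all $v\in V$. Then $$\eta_{\mathrm{TV}}(P_{V\cup\{W\}|X})\le(1-\eta_W)\,\eta_{\mathrm{TV}}(P_{V|X})+\eta_W\,\eta_{\mathrm{TV}}(P_{V\cup\mathrm{pa}(W)|X}),$$ where $\eta_W=\eta_{\mathrm{TV}}(P_{Y_W|Y_{\mathrm{pa}(W)}})$. Moreover, for every set of nodes $V$, $\eta_{\mathrm{TV}}(P_{V|X})\le\mathrm{perc}(V)$, where percolation uses removal probabilities $1-\eta_{\mathrm{TV}}(P_{Y_v|Y_{\mathrm{pa}(v)}})$. In particular, if all these node coefficients are $<1$ then $\eta_{\mathrm{TV}}(P_{V|X})<1$ for every $V$ not containing $X$.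
   Context: Bayesian network: finite directed acyclic graph whose vertices are random variables $Y_v$ on finite alphabets, each non-source vertex $v$ with a kernel $P_{Y_v|Y_{\mathrm{pa}(v)}}$ from its parents $\mathrm{pa}(v)$; a distinguished parentless source $X$; vertices topologically sorted ($v_1>v_2$ implies no directed path from $v_1$ to $v_2$). $P_{V|X}$ is the induced kernel from $X$ to $(Y_v)_{v\in V}$. Total variation $d_{\mathrm{TV}}(P,Q)=\sup_E|P(E)-Q(E)|$. Dobrushin coefficient: $\eta_{\mathrm{TV}}(K)=\sup_{x,x'}d_{\mathrm{TV}}(K(\cdot|x),K(\cdot|x'))$ (equivalently the supremum of $d_{\mathrm{TV}}(K\circ P,K\circ Q)/d_{\mathrm{TV}}(P,Q)$). Site percolation: each node $v\ne X$ independently removed with probability $1-\eta_v$ ($X$ never removed; parentless nodes other than $X$ are removed); $\mathrm{perc}(V)$ is the probability of a directed path of non-removed nodes from $X$ to some node in $V$. *)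

theory Defs
  imports "HOL-Analysis.Analysis"
begin

definition tv_dist :: "'b set \<Rightarrow> ('b \<Rightarrow> real) \<Rightarrow> ('b \<Rightarrow> real) \<Rightarrow> real" where
  "tv_dist S p q = (SUP E \<in> Pow S. \<bar>(\<Sum>e\<in>E. p e) - (\<Sum>e\<in>E. q e)\<bar>)"

definition dobrushin :: "'i set \<Rightarrow> 'b set \<Rightarrow> ('i \<Rightarrow> 'b \<Rightarrow> real) \<Rightarrow> real" where
  "dobrushin I S K = (SUP p \<in> I \<times> I. tv_dist S (K (fst p)) (K (snd p)))"

text \<open>Bayesian network on nodes 0..n-1 (topologically sorted: parents are smaller),
  source X, parent sets pa, finite nonempty alphabets A v, kernels K v, where
  K v c b is the probability that Y_v = b given parent configuration c (a function on pa v).\<close>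
definition bayes_net ::
  "nat \<Rightarrow> nat \<Rightarrow> (nat \<Rightarrow> nat set) \<Rightarrow> (nat \<Rightarrow> 'a set) \<Rightarrow> (nat \<Rightarrow> (nat \<Rightarrow> 'a) \<Rightarrow> 'a \<Rightarrow> real) \<Rightarrow> bool"
  where
  "bayes_net n X pa A K \<longleftrightarrow>
     X < n \<and> pa X = {} \<and>
     (\<forall>v<n. pa v \<subseteq> {..<v}) \<and>
     (\<forall>v<n. finite (A v) \<and> A v \<noteq> {}) \<and>
     (\<forall>v<n. v \<noteq> X \<longrightarrow>
        (\<forall>c \<in> PiE (pa v) A. (\<forall>b\<in>A v. 0 \<le> K v c b) \<and> (\<Sum>b\<in>A v. K v c b) = 1))"

definition bn_joint ::
  "nat \<Rightarrow> nat \<Rightarrow> (nat \<Rightarrow> nat set) \<Rightarrow> (nat \<Rightarrow> (nat \<Rightarrow> 'a) \<Rightarrow> 'a \<Rightarrow> real) \<Rightarrow> (nat \<Rightarrow> 'a) \<Rightarrow> real"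
  where
  "bn_joint n X pa K y = (\<Prod>v \<in> {..<n} - {X}. K v (restrict y (pa v)) (y v))"

definition bn_marg ::
  "nat \<Rightarrow> nat \<Rightarrow> (nat \<Rightarrow> nat set) \<Rightarrow> (nat \<Rightarrow> 'a set) \<Rightarrow> (nat \<Rightarrow> (nat \<Rightarrow> 'a) \<Rightarrow> 'a \<Rightarrow> real)
     \<Rightarrow> nat set \<Rightarrow> 'a \<Rightarrow> (nat \<Rightarrow> 'a) \<Rightarrow> real"
  where
  "bn_marg n X pa A K V x z =
     (\<Sum>y \<in> {y \<in> PiE {..<n} A. y X = x \<and> restrict y V = z}. bn_joint n X pa K y)"

definition bn_eta ::
  "nat \<Rightarrow> nat \<Rightarrow> (nat \<Rightarrow> nat set) \<Rightarrow> (nat \<Rightarrow> 'a set) \<Rightarrow> (nat \<Rightarrow> (nat \<Rightarrow> 'a) \<Rightarrow> 'a \<Rightarrow> real)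
     \<Rightarrow> nat set \<Rightarrow> real"
  where
  "bn_eta n X pa A K V = dobrushin (A X) (PiE V A) (bn_marg n X pa A K V)"

definition node_eta ::
  "(nat \<Rightarrow> nat set) \<Rightarrow> (nat \<Rightarrow> 'a set) \<Rightarrow> (nat \<Rightarrow> (nat \<Rightarrow> 'a) \<Rightarrow> 'a \<Rightarrow> real) \<Rightarrow> nat \<Rightarrow> real"
  where
  "node_eta pa A K v = dobrushin (PiE (pa v) A) (A v) (K v)"

text \<open>Directed edges u -> v (u a parent of v) between non-removed nodes, when the set of
  kept nodes (other than X) is S; X is never removed.\<close>
definition perc_edges :: "(nat \<Rightarrow> nat set) \<Rightarrow> nat \<Rightarrow> nat set \<Rightarrow> (nat \<times> nat) set" where
  "perc_edges pa X S = {(u, v). v \<in> S \<and> u \<in> pa v \<and> (u \<in> S \<or> u = X)}"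

text \<open>Site percolation: each node v \<noteq> X kept independently with probability q v;
  probability of a directed path of kept nodes from X to some node of V.\<close>
definition perc :: "nat \<Rightarrow> nat \<Rightarrow> (nat \<Rightarrow> nat set) \<Rightarrow> (nat \<Rightarrow> real) \<Rightarrow> nat set \<Rightarrow> real" where
  "perc n X pa q V =
     (\<Sum>S \<in> Pow ({..<n} - {X}).
        (\<Prod>v\<in>S. q v) * (\<Prod>v \<in> ({..<n} - {X}) - S. 1 - q v) *
        (if \<exists>v\<in>V. (X, v) \<in> (perc_edges pa X S)\<^sup>* then 1 else 0))"

end

theory Submission
  imports Defs
begin

text \<open>Let \<open>W\<close> lie above every node of \<open>V\<close>. Given the values on \<open>V \<union> pa W\<close>, the value at \<open>W\<close>
  is drawn from the kernel of \<open>W\<close>, so the difference of the laws of \<open>Y\<^bsub>V \<union> {W}\<^esub>\<close> under two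
  inputs arises from the difference \<open>f\<close> of the laws of \<open>Y\<^bsub>V \<union> pa W\<^esub>\<close> by applying that kernel
  separately on each fibre of the projection onto \<open>V\<close>. A kernel with coefficient \<open>\<eta>\<close> maps a
  signed measure of total variation \<open>t\<close> and mass \<open>s\<close> to one of total variation at most
  \<open>\<eta> t + (1 - \<eta>) |s|\<close>; on the fibre over \<open>c\<close>, \<open>s\<close> is the difference of the laws of \<open>Y\<^bsub>V\<^esub>\<close>
  at \<open>c\<close>, and summing over fibres gives the first inequality. Percolation satisfies the same
  recursion with equality, so induction on the largest node gives \<open>\<eta>(V) \<le> perc(V)\<close>; the same
  induction gives \<open>\<eta>(V) < 1\<close> when all node coefficients are below one.\<close>

lemma tv_dist_eq_half_l1:
  fixes p q :: "'b \<Rightarrow> real"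
  assumes fin: "finite S" and eq: "sum p S = sum q S"
  shows "tv_dist S p q = (\<Sum>s\<in>S. \<bar>p s - q s\<bar>) / 2"
proof -
  define d where "d = (\<lambda>s. p s - q s)"
  define pos where "pos = (\<Sum>s\<in>S. max (d s) 0)"
  define neg where "neg = (\<Sum>s\<in>S. max (- d s) 0)"
  define l1 where "l1 = (\<Sum>s\<in>S. \<bar>d s\<bar>)"
  have "pos - neg = sum d S"
    unfolding pos_def neg_def sum_subtractf[symmetric] by (rule sum.cong) auto
  also have "sum d S = 0" using eq by (simp add: d_def sum_subtractf)
  finally have "pos = neg" by simp
  moreover have "pos + neg = l1"
    unfolding pos_def neg_def l1_def sum.distrib[symmetric] by (rule sum.cong) auto
  ultimately have half: "pos = l1 / 2" "neg = l1 / 2" by auto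
  have bound: "\<bar>sum p E - sum q E\<bar> \<le> l1 / 2" if "E \<subseteq> S" for E
  proof -
    have "sum p E - sum q E = sum d E" by (simp add: d_def sum_subtractf)
    moreover have "sum d E \<le> pos"
      using sum_mono[of E d "\<lambda>s. max (d s) 0"] sum_mono2[OF fin that, of "\<lambda>s. max (d s) 0"]
      unfolding pos_def by force
    moreover have "- sum d E \<le> neg"
      using sum_mono[of E "\<lambda>s. - d s" "\<lambda>s. max (- d s) 0"] sum_mono2[OF fin that, of "\<lambda>s. max (- d s) 0"]
      unfolding neg_def sum_negf by force
    ultimately show ?thesis using half by linarith
  qed
  define E\<^sub>0 where "E\<^sub>0 = {s\<in>S. d s > 0}"
  have "sum d E\<^sub>0 = pos"
    unfolding E\<^sub>0_def pos_def sum.inter_filter[OF fin] by (rule sum.cong) auto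
  moreover have "0 \<le> pos" unfolding pos_def by (rule sum_nonneg) auto
  ultimately have attained: "\<bar>sum p E\<^sub>0 - sum q E\<^sub>0\<bar> = l1 / 2"
    using half by (simp add: d_def sum_subtractf)
  have "tv_dist S p q = l1 / 2" unfolding tv_dist_def
  proof (rule antisym)
    show "(SUP E\<in>Pow S. \<bar>sum p E - sum q E\<bar>) \<le> l1 / 2"
      by (rule cSUP_least) (use bound in auto)
    show "l1 / 2 \<le> (SUP E\<in>Pow S. \<bar>sum p E - sum q E\<bar>)"
      by (rule cSUP_upper2[of _ _ E\<^sub>0]) (use fin attained in \<open>auto simp: E\<^sub>0_def\<close>)
  qed
  thus ?thesis by (simp add: l1_def d_def)
qed

lemma tv_dist_pmf_bounds:
  fixes p q :: "'b \<Rightarrow> real"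
  assumes "finite S" "\<And>s. s\<in>S \<Longrightarrow> 0 \<le> p s" "\<And>s. s\<in>S \<Longrightarrow> 0 \<le> q s"
    and "sum p S = 1" "sum q S = 1"
  shows "0 \<le> tv_dist S p q" "tv_dist S p q \<le> 1"
proof -
  have tv: "tv_dist S p q = (\<Sum>s\<in>S. \<bar>p s - q s\<bar>) / 2"
    using assms by (simp add: tv_dist_eq_half_l1)
  have "(\<Sum>s\<in>S. \<bar>p s - q s\<bar>) \<le> (\<Sum>s\<in>S. p s + q s)"
    by (rule sum_mono) (use assms in force)
  also have "\<dots> = 2" using assms by (simp add: sum.distrib)
  finally show "tv_dist S p q \<le> 1" using tv by simp
  show "0 \<le> tv_dist S p q" unfolding tv by (simp add: sum_nonneg)
qed

lemma tv_dist_le_dobrushin: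
  assumes "finite I" "i \<in> I" "i' \<in> I"
  shows "tv_dist S (K i) (K i') \<le> dobrushin I S K"
  unfolding dobrushin_def by (rule cSUP_upper2[of _ _ "(i, i')"]) (use assms in auto)

lemma dobrushin_leI:
  assumes "I \<noteq> {}" "\<And>i i'. i \<in> I \<Longrightarrow> i' \<in> I \<Longrightarrow> tv_dist S (K i) (K i') \<le> c"
  shows "dobrushin I S K \<le> c"
  unfolding dobrushin_def by (rule cSUP_least) (use assms in auto)

lemma dobrushin_pmf_bounds:
  assumes "finite I" "I \<noteq> {}" "finite S"
    and "\<And>i s. i \<in> I \<Longrightarrow> s \<in> S \<Longrightarrow> 0 \<le> K i s" "\<And>i. i \<in> I \<Longrightarrow> sum (K i) S = 1"
  shows "0 \<le> dobrushin I S K" "dobrushin I S K \<le> 1"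
proof -
  obtain i where "i \<in> I" using assms(2) by blast
  have "tv_dist S (K i) (K i) \<le> dobrushin I S K"
    by (rule tv_dist_le_dobrushin) (use assms(1) \<open>i \<in> I\<close> in auto)
  moreover have "0 \<le> tv_dist S (K i) (K i)"
    using assms(4,5) \<open>i \<in> I\<close> by (intro tv_dist_pmf_bounds(1)[OF assms(3)]) auto
  ultimately show "0 \<le> dobrushin I S K" by linarith
  show "dobrushin I S K \<le> 1"
    using assms(2,4,5) by (intro dobrushin_leI tv_dist_pmf_bounds(2)[OF assms(3)]) auto
qed

text \<open>With \<open>P\<close> the mass of the positive part of \<open>f\<close>, \<open>P\<close> times the image of \<open>f\<close> is a
  nonnegative combination of differences of rows of \<open>L\<close>.\<close>

lemma zero_sum_kernel_contraction:
  fixes f :: "'u \<Rightarrow> real" and L :: "'u \<Rightarrow> 'w \<Rightarrow> real"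
  assumes fin: "finite F" and zero: "sum f F = 0"
    and rows: "\<And>u u'. u \<in> F \<Longrightarrow> u' \<in> F \<Longrightarrow> (\<Sum>w\<in>\<Omega>. \<bar>L u w - L u' w\<bar>) \<le> 2 * \<eta>"
  shows "(\<Sum>w\<in>\<Omega>. \<bar>\<Sum>u\<in>F. f u * L u w\<bar>) \<le> \<eta> * (\<Sum>u\<in>F. \<bar>f u\<bar>)"
proof -
  define fp where "fp u = max (f u) 0" for u
  define fm where "fm u = max (- f u) 0" for u
  define P where "P = sum fp F"
  have f_eq: "f u = fp u - fm u" and abs_eq: "\<bar>f u\<bar> = fp u + fm u"
    and nonneg: "0 \<le> fp u" "0 \<le> fm u" for u
    by (auto simp: fp_def fm_def)
  have "sum fm F = P" using zero unfolding P_def f_eq sum_subtractf by simp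
  hence abs_sum: "(\<Sum>u\<in>F. \<bar>f u\<bar>) = 2 * P" unfolding abs_eq sum.distrib P_def by simp
  have combination: "P * (\<Sum>u\<in>F. f u * L u w)
      = (\<Sum>u\<in>F. \<Sum>u'\<in>F. fp u * fm u' * (L u w - L u' w))" for w
  proof -
    have "(\<Sum>u\<in>F. \<Sum>u'\<in>F. fp u * fm u' * (L u w - L u' w))
        = (\<Sum>u\<in>F. fp u * L u w) * sum fm F - sum fp F * (\<Sum>u'\<in>F. fm u' * L u' w)"
      by (simp add: sum_subtractf right_diff_distrib sum_distrib_left sum_distrib_right ac_simps)
        (rule sum.swap)
    thus ?thesis using \<open>sum fm F = P\<close>
      by (simp add: P_def f_eq left_diff_distrib sum_subtractf right_diff_distrib mult.commute)
  qed
  have "P * (\<Sum>w\<in>\<Omega>. \<bar>\<Sum>u\<in>F. f u * L u w\<bar>)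
      \<le> (\<Sum>w\<in>\<Omega>. \<Sum>u\<in>F. \<Sum>u'\<in>F. fp u * fm u' * \<bar>L u w - L u' w\<bar>)"
    unfolding sum_distrib_left
  proof (rule sum_mono)
    fix w
    have "P * \<bar>\<Sum>u\<in>F. f u * L u w\<bar> = \<bar>\<Sum>u\<in>F. \<Sum>u'\<in>F. fp u * fm u' * (L u w - L u' w)\<bar>"
      using nonneg by (simp add: P_def sum_nonneg abs_mult flip: combination)
    also have "\<dots> \<le> (\<Sum>u\<in>F. \<Sum>u'\<in>F. fp u * fm u' * \<bar>L u w - L u' w\<bar>)"
      by (intro order_trans[OF sum_abs] sum_mono) (simp add: abs_mult nonneg)
    finally show "P * \<bar>\<Sum>u\<in>F. f u * L u w\<bar> \<le> \<dots>" .
  qed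
  also have "\<dots> = (\<Sum>u\<in>F. \<Sum>u'\<in>F. fp u * fm u' * (\<Sum>w\<in>\<Omega>. \<bar>L u w - L u' w\<bar>))"
    by (simp add: sum_distrib_left sum.swap[of _ \<Omega>])
  also have "\<dots> \<le> (\<Sum>u\<in>F. \<Sum>u'\<in>F. fp u * fm u' * (2 * \<eta>))"
    by (intro sum_mono mult_left_mono) (auto simp: rows nonneg)
  also have "\<dots> = 2 * \<eta> * (sum fp F * sum fm F)"
    by (simp add: sum_distrib_left sum_distrib_right ac_simps)
  also have "\<dots> = P * (\<eta> * (\<Sum>u\<in>F. \<bar>f u\<bar>))"
    using \<open>sum fm F = P\<close> abs_sum by (simp add: P_def algebra_simps)
  finally have scaled: "P * (\<Sum>w\<in>\<Omega>. \<bar>\<Sum>u\<in>F. f u * L u w\<bar>) \<le> P * (\<eta> * (\<Sum>u\<in>F. \<bar>f u\<bar>))" .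
  show ?thesis
  proof (cases "P = 0")
    case True
    hence "\<forall>u\<in>F. \<bar>f u\<bar> = 0" using abs_sum fin by (simp add: sum_nonneg_eq_0_iff)
    thus ?thesis by simp
  next
    case False
    hence "0 < P" using nonneg by (simp add: P_def sum_nonneg order_less_le)
    thus ?thesis using scaled by simp
  qed
qed

lemma nonneg_kernel_preserves_mass:
  fixes h :: "'u \<Rightarrow> real" and L :: "'u \<Rightarrow> 'w \<Rightarrow> real"
  assumes "\<And>u. u \<in> F \<Longrightarrow> 0 \<le> h u"
    and nonneg: "\<And>u w. u \<in> F \<Longrightarrow> w \<in> \<Omega> \<Longrightarrow> 0 \<le> L u w"
    and stoch: "\<And>u. u \<in> F \<Longrightarrow> sum (L u) \<Omega> = 1"
  shows "(\<Sum>w\<in>\<Omega>. \<bar>\<Sum>u\<in>F. h u * L u w\<bar>) = sum h F"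
proof -
  have "(\<Sum>w\<in>\<Omega>. \<bar>\<Sum>u\<in>F. h u * L u w\<bar>) = (\<Sum>w\<in>\<Omega>. \<Sum>u\<in>F. h u * L u w)"
    using assms by (intro sum.cong refl abs_of_nonneg sum_nonneg mult_nonneg_nonneg) auto
  also have "\<dots> = (\<Sum>u\<in>F. h u * sum (L u) \<Omega>)"
    by (subst sum.swap) (simp add: sum_distrib_left)
  finally show ?thesis by (simp add: stoch)
qed

text \<open>The witness scales the positive part of \<open>f\<close> down to the mass of its negative part.\<close>

lemma zero_mass_decomposition:
  fixes f :: "'u \<Rightarrow> real"
  assumes fin: "finite F" and mass: "0 \<le> sum f F"
  obtains g h where "\<And>u. f u = g u + h u" "sum g F = 0" "\<And>u. 0 \<le> h u"
    "(\<Sum>u\<in>F. \<bar>g u\<bar>) = (\<Sum>u\<in>F. \<bar>f u\<bar>) - sum f F"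
proof -
  define fp where "fp u = max (f u) 0" for u
  define fm where "fm u = max (- f u) 0" for u
  define p where "p = sum fp F"
  define m where "m = sum fm F"
  have f_eq: "f u = fp u - fm u" and abs_eq: "\<bar>f u\<bar> = fp u + fm u"
    and parts_nonneg: "0 \<le> fp u" "0 \<le> fm u" for u
    by (auto simp: fp_def fm_def)
  have sum_f: "sum f F = p - m" by (simp add: p_def m_def f_eq sum_subtractf)
  have sum_abs: "(\<Sum>u\<in>F. \<bar>f u\<bar>) = p + m" by (simp add: p_def m_def abs_eq sum.distrib)
  have "0 \<le> m" unfolding m_def by (simp add: sum_nonneg parts_nonneg)
  with mass sum_f have "m \<le> p" by simp
  show ?thesis
  proof (cases "p = 0")
    case True
    moreover from True have "m = 0" using \<open>0 \<le> m\<close> \<open>m \<le> p\<close> by simp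
    ultimately have "\<forall>u\<in>F. fp u = 0 \<and> fm u = 0"
      using fin parts_nonneg by (simp add: p_def m_def sum_nonneg_eq_0_iff)
    hence "\<forall>u\<in>F. f u = 0" by (simp add: f_eq)
    thus ?thesis by (intro that[of f "\<lambda>_. 0"]) simp_all
  next
    case False
    hence "0 < p" using \<open>0 \<le> m\<close> \<open>m \<le> p\<close> by simp
    have "(\<Sum>u\<in>F. m / p * fp u) = m / p * p" unfolding p_def by (rule sum_distrib_left[symmetric])
    hence scaled: "(\<Sum>u\<in>F. m / p * fp u) = m" using \<open>0 < p\<close> by simp
    have "\<bar>m / p * fp u - fm u\<bar> = m / p * fp u + fm u" for u
      using \<open>0 \<le> m\<close> \<open>0 < p\<close> by (cases "0 \<le> f u") (simp_all add: fp_def fm_def)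
    hence "(\<Sum>u\<in>F. \<bar>m / p * fp u - fm u\<bar>) = (\<Sum>u\<in>F. m / p * fp u) + sum fm F"
      by (simp add: sum.distrib)
    show ?thesis
    proof (rule that[of "\<lambda>u. m / p * fp u - fm u" "\<lambda>u. (p - m) / p * fp u"])
      show "f u = m / p * fp u - fm u + (p - m) / p * fp u" for u
        using \<open>0 < p\<close> by (simp add: f_eq field_simps)
      show "0 \<le> (p - m) / p * fp u" for u using \<open>m \<le> p\<close> \<open>0 < p\<close> parts_nonneg by simp
      show "(\<Sum>u\<in>F. m / p * fp u - fm u) = 0" unfolding sum_subtractf scaled by (simp add: m_def)
      show "(\<Sum>u\<in>F. \<bar>m / p * fp u - fm u\<bar>) = (\<Sum>u\<in>F. \<bar>f u\<bar>) - sum f F"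
        unfolding \<open>(\<Sum>u\<in>F. \<bar>m / p * fp u - fm u\<bar>) = _\<close> scaled sum_abs sum_f by (simp add: m_def)
    qed
  qed
qed

lemma kernel_contraction_nonneg_mass:
  fixes f :: "'u \<Rightarrow> real" and L :: "'u \<Rightarrow> 'w \<Rightarrow> real"
  assumes fin: "finite F" and mass: "0 \<le> sum f F"
    and nonneg: "\<And>u w. u \<in> F \<Longrightarrow> w \<in> \<Omega> \<Longrightarrow> 0 \<le> L u w"
    and stoch: "\<And>u. u \<in> F \<Longrightarrow> sum (L u) \<Omega> = 1"
    and rows: "\<And>u u'. u \<in> F \<Longrightarrow> u' \<in> F \<Longrightarrow> (\<Sum>w\<in>\<Omega>. \<bar>L u w - L u' w\<bar>) \<le> 2 * \<eta>"
  shows "(\<Sum>w\<in>\<Omega>. \<bar>\<Sum>u\<in>F. f u * L u w\<bar>) \<le> \<eta> * (\<Sum>u\<in>F. \<bar>f u\<bar>) + (1 - \<eta>) * sum f F"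
proof -
  obtain g h where split: "\<And>u. f u = g u + h u" and g: "sum g F = 0" and h: "\<And>u. 0 \<le> h u"
    and g_abs: "(\<Sum>u\<in>F. \<bar>g u\<bar>) = (\<Sum>u\<in>F. \<bar>f u\<bar>) - sum f F"
    using zero_mass_decomposition[OF fin mass] by blast
  have "sum h F = sum f F" using g by (simp add: split sum.distrib)
  have "(\<Sum>w\<in>\<Omega>. \<bar>\<Sum>u\<in>F. f u * L u w\<bar>)
      \<le> (\<Sum>w\<in>\<Omega>. \<bar>\<Sum>u\<in>F. g u * L u w\<bar>) + (\<Sum>w\<in>\<Omega>. \<bar>\<Sum>u\<in>F. h u * L u w\<bar>)"
    unfolding sum.distrib[symmetric]
    by (rule sum_mono) (simp only: split distrib_right sum.distrib abs_triangle_ineq)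
  also have "\<dots> \<le> \<eta> * ((\<Sum>u\<in>F. \<bar>f u\<bar>) - sum f F) + sum f F"
    using zero_sum_kernel_contraction[OF fin g rows] nonneg_kernel_preserves_mass[of F h \<Omega> L]
      h nonneg stoch \<open>sum h F = sum f F\<close>
    unfolding g_abs by simp
  finally show ?thesis by (simp add: algebra_simps)
qed

lemma kernel_contraction:
  fixes f :: "'u \<Rightarrow> real" and L :: "'u \<Rightarrow> 'w \<Rightarrow> real"
  assumes fin: "finite F"
    and nonneg: "\<And>u w. u \<in> F \<Longrightarrow> w \<in> \<Omega> \<Longrightarrow> 0 \<le> L u w"
    and stoch: "\<And>u. u \<in> F \<Longrightarrow> sum (L u) \<Omega> = 1"
    and rows: "\<And>u u'. u \<in> F \<Longrightarrow> u' \<in> F \<Longrightarrow> (\<Sum>w\<in>\<Omega>. \<bar>L u w - L u' w\<bar>) \<le> 2 * \<eta>"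
  shows "(\<Sum>w\<in>\<Omega>. \<bar>\<Sum>u\<in>F. f u * L u w\<bar>) \<le> \<eta> * (\<Sum>u\<in>F. \<bar>f u\<bar>) + (1 - \<eta>) * \<bar>\<Sum>u\<in>F. f u\<bar>"
proof (cases "0 \<le> sum f F")
  case True
  thus ?thesis using kernel_contraction_nonneg_mass[OF fin True nonneg stoch rows] by simp
next
  case False
  hence "0 \<le> sum (\<lambda>u. - f u) F" by (simp add: sum_negf)
  from kernel_contraction_nonneg_mass[OF fin this nonneg stoch rows] False
  show ?thesis by (simp add: sum_negf)
qed

lemma fibred_kernel_contraction:
  fixes f :: "'u \<Rightarrow> real" and L :: "'u \<Rightarrow> 'w \<Rightarrow> real" and r :: "'u \<Rightarrow> 'c"
  assumes fin: "finite B" "finite C" "r ` B \<subseteq> C"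
    and nonneg: "\<And>u w. u \<in> B \<Longrightarrow> w \<in> \<Omega> \<Longrightarrow> 0 \<le> L u w"
    and stoch: "\<And>u. u \<in> B \<Longrightarrow> sum (L u) \<Omega> = 1"
    and rows: "\<And>u u'. u \<in> B \<Longrightarrow> u' \<in> B \<Longrightarrow> (\<Sum>w\<in>\<Omega>. \<bar>L u w - L u' w\<bar>) \<le> 2 * \<eta>"
  shows "(\<Sum>c\<in>C. \<Sum>w\<in>\<Omega>. \<bar>\<Sum>u | u \<in> B \<and> r u = c. f u * L u w\<bar>)
    \<le> \<eta> * (\<Sum>u\<in>B. \<bar>f u\<bar>) + (1 - \<eta>) * (\<Sum>c\<in>C. \<bar>\<Sum>u | u \<in> B \<and> r u = c. f u\<bar>)"
proof -
  have "(\<Sum>c\<in>C. \<Sum>w\<in>\<Omega>. \<bar>\<Sum>u | u \<in> B \<and> r u = c. f u * L u w\<bar>)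
      \<le> (\<Sum>c\<in>C. \<eta> * (\<Sum>u | u \<in> B \<and> r u = c. \<bar>f u\<bar>) + (1 - \<eta>) * \<bar>\<Sum>u | u \<in> B \<and> r u = c. f u\<bar>)"
    by (intro sum_mono kernel_contraction) (use fin nonneg stoch rows in auto)
  also have "\<dots> = \<eta> * (\<Sum>u\<in>B. \<bar>f u\<bar>) + (1 - \<eta>) * (\<Sum>c\<in>C. \<bar>\<Sum>u | u \<in> B \<and> r u = c. f u\<bar>)"
    by (simp add: sum.distrib sum.group[OF fin] flip: sum_distrib_left)
  finally show ?thesis .
qed

lemma sum_PiE_insert:
  assumes "k \<notin> S"
  shows "(\<Sum>y\<in>PiE (insert k S) A. h y) = (\<Sum>a\<in>A k. \<Sum>g\<in>PiE S A. h (g(k := a)))"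
  unfolding PiE_insert_eq
  by (subst sum.reindex[OF inj_combinator[OF assms]]) (simp add: sum.cartesian_product case_prod_unfold)

lemma sum_PiE_insert_restrict:
  assumes "k \<notin> S"
  shows "(\<Sum>z\<in>PiE (insert k S) A. h (restrict z S) (z k)) = (\<Sum>c\<in>PiE S A. \<Sum>a\<in>A k. h c a)"
  unfolding sum_PiE_insert[OF assms] using assms by (subst sum.swap) (simp cong: sum.cong)

lemma fun_upd_eq_fun_upd_iff:
  assumes "f k = f' k"
  shows "f(k := a) = f'(k := b) \<longleftrightarrow> f = f' \<and> a = b"
  using assms unfolding fun_eq_iff by (metis fun_upd_apply)

lemma restrict_insert_eq_iff:
  assumes z: "z \<in> PiE (insert k S) A" and k: "k \<notin> S"
  shows "restrict (g(k := a)) (insert k S) = z \<longleftrightarrow> restrict g S = restrict z S \<and> a = z k"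
proof -
  have "z = restrict (z(k := z k)) (insert k S)" using z by simp
  also have "\<dots> = (restrict z S)(k := z k)" using k by simp
  finally have z_eq: "z = (restrict z S)(k := z k)" .
  have g_eq: "restrict (g(k := a)) (insert k S) = (restrict g S)(k := a)" using k by simp
  have "(restrict g S)(k := a) = (restrict z S)(k := z k) \<longleftrightarrow> restrict g S = restrict z S \<and> a = z k"
    by (rule fun_upd_eq_fun_upd_iff) (simp add: k)
  then show ?thesis by (simp only: g_eq flip: z_eq)
qed

lemma nat_set_induct_max [consumes 1, case_names empty insert_max]:
  fixes P :: "nat set \<Rightarrow> bool"
  assumes "finite V" and empty: "P {}"
    and insert_max: "\<And>W V. \<forall>v\<in>V. v < W \<Longrightarrow> (\<And>U. U \<subseteq> {..<W} \<Longrightarrow> P U) \<Longrightarrow> P (insert W V)"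
  shows "P V"
proof -
  have "\<forall>V. V \<subseteq> {..<k} \<longrightarrow> P V" for k
  proof (induction k rule: less_induct)
    case (less k)
    show ?case
    proof (intro allI impI)
      fix V assume V: "V \<subseteq> {..<k}"
      show "P V"
      proof (cases "V = {}")
        case False
        define W where "W = Max V"
        have "finite V" using V finite_subset by blast
        hence "W \<in> V" "\<forall>v\<in>V - {W}. v < W"
          using False Max_in Max_ge by (auto simp: W_def order.order_iff_strict)
        moreover have "W < k" using \<open>W \<in> V\<close> V by auto
        ultimately show "P V"
          using insert_max[of "V - {W}" W] less.IH by (metis insert_Diff)
      qed (simp add: empty)
    qed
  qed
  thus ?thesis using \<open>finite V\<close> by (auto simp: finite_nat_iff_bounded)
qed

definition bernoulli_weight :: "'v set \<Rightarrow> ('v \<Rightarrow> real) \<Rightarrow> 'v set \<Rightarrow> real" where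
  "bernoulli_weight U q S = (\<Prod>v\<in>S. q v) * (\<Prod>v\<in>U - S. 1 - q v)"

lemma sum_bernoulli_weight:
  "finite U \<Longrightarrow> (\<Sum>S\<in>Pow U. bernoulli_weight U q S) = 1"
  using prod_add[of U q "\<lambda>v. 1 - q v"] by (simp add: bernoulli_weight_def)

lemma sum_bernoulli_weight_split:
  assumes fin: "finite U" and W: "W \<in> U"
  shows "(\<Sum>S\<in>Pow U. bernoulli_weight U q S * g S)
       = (\<Sum>T\<in>Pow (U - {W}). bernoulli_weight (U - {W}) q T * ((1 - q W) * g T + q W * g (insert W T)))"
proof -
  define U' where "U' = U - {W}"
  have U: "U = insert W U'" "W \<notin> U'" "finite U'" using W fin by (auto simp: U'_def)
  define h where "h S = bernoulli_weight U q S * g S" for S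
  have "(\<Sum>S\<in>Pow U. h S) = (\<Sum>T\<in>Pow U'. h T) + (\<Sum>T\<in>insert W ` Pow U'. h T)"
    unfolding U(1) Pow_insert by (rule sum.union_disjoint) (use U in auto)
  also have "(\<Sum>T\<in>insert W ` Pow U'. h T) = (\<Sum>T\<in>Pow U'. h (insert W T))"
  proof -
    have "inj_on (insert W) (Pow U')"
      using U(2) unfolding inj_on_def by (metis PowD insert_ident subset_iff)
    thus ?thesis by (simp add: sum.reindex)
  qed
  finally have "(\<Sum>S\<in>Pow U. h S) = (\<Sum>T\<in>Pow U'. h T + h (insert W T))"
    by (simp add: sum.distrib)
  also have "\<dots> = (\<Sum>T\<in>Pow U'. bernoulli_weight U' q T * ((1 - q W) * g T + q W * g (insert W T)))"
  proof (rule sum.cong[OF refl])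
    fix T assume "T \<in> Pow U'"
    hence T: "W \<notin> T" "finite T" "U - insert W T = U' - T" "U - T = insert W (U' - T)"
      using U finite_subset by auto
    show "h T + h (insert W T) = bernoulli_weight U' q T * ((1 - q W) * g T + q W * g (insert W T))"
      unfolding h_def bernoulli_weight_def T(3,4) using T(1,2) U(2,3) by (simp add: algebra_simps)
  qed
  finally show ?thesis unfolding h_def U'_def .
qed

locale bayes_network =
  fixes n X :: nat and pa :: "nat \<Rightarrow> nat set" and A :: "nat \<Rightarrow> 'a set"
    and K :: "nat \<Rightarrow> (nat \<Rightarrow> 'a) \<Rightarrow> 'a \<Rightarrow> real"
  assumes bayes_net: "bayes_net n X pa A K"
begin

abbreviation marg where "marg \<equiv> bn_marg n X pa A K"
abbreviation eta where "eta \<equiv> bn_eta n X pa A K"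
abbreviation eta_node where "eta_node \<equiv> node_eta pa A K"

lemma source_less: "X < n"
  and parents_less: "v < n \<Longrightarrow> pa v \<subseteq> {..<v}"
  and finite_alphabet: "v < n \<Longrightarrow> finite (A v)"
  and alphabet_nonempty: "v < n \<Longrightarrow> A v \<noteq> {}"
  and kernel_nonneg: "v < n \<Longrightarrow> v \<noteq> X \<Longrightarrow> c \<in> PiE (pa v) A \<Longrightarrow> b \<in> A v \<Longrightarrow> 0 \<le> K v c b"
  and sum_kernel: "v < n \<Longrightarrow> v \<noteq> X \<Longrightarrow> c \<in> PiE (pa v) A \<Longrightarrow> sum (K v c) (A v) = 1"
  using bayes_net unfolding bayes_net_def by auto

lemma finite_configs: "S \<subseteq> {..<n} \<Longrightarrow> finite (PiE S A)"
  by (rule finite_PiE) (auto intro: finite_subset finite_alphabet)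

lemma configs_nonempty: "S \<subseteq> {..<n} \<Longrightarrow> PiE S A \<noteq> {}"
  using alphabet_nonempty by (auto simp: PiE_eq_empty_iff)

lemma restrict_config: "y \<in> PiE T A \<Longrightarrow> S \<subseteq> T \<Longrightarrow> restrict y S \<in> PiE S A"
  by (auto simp: restrict_PiE_iff)

lemma parent_config: "y \<in> PiE {..<m} A \<Longrightarrow> v \<le> m \<Longrightarrow> v < n \<Longrightarrow> restrict y (pa v) \<in> PiE (pa v) A"
  using parents_less by (force intro: restrict_config)

text \<open>The source becomes an ordinary node whose kernel is the point mass at the input \<open>x\<close>.\<close>

definition node_kernel :: "'a \<Rightarrow> nat \<Rightarrow> (nat \<Rightarrow> 'a) \<Rightarrow> 'a \<Rightarrow> real" where
  "node_kernel x v c a = (if v = X then of_bool (a = x) else K v c a)"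

lemma node_kernel_nonneg: "v < n \<Longrightarrow> c \<in> PiE (pa v) A \<Longrightarrow> a \<in> A v \<Longrightarrow> 0 \<le> node_kernel x v c a"
  by (simp add: node_kernel_def kernel_nonneg)

lemma sum_node_kernel: "v < n \<Longrightarrow> x \<in> A X \<Longrightarrow> c \<in> PiE (pa v) A \<Longrightarrow> sum (node_kernel x v c) (A v) = 1"
  by (cases "v = X") (simp_all add: node_kernel_def sum_kernel finite_alphabet of_bool_def)

definition ancestral_expect :: "nat \<Rightarrow> 'a \<Rightarrow> ((nat \<Rightarrow> 'a) \<Rightarrow> real) \<Rightarrow> real" where
  "ancestral_expect m x \<phi> =
     (\<Sum>y\<in>PiE {..<m} A. (\<Prod>v<m. node_kernel x v (restrict y (pa v)) (y v)) * \<phi> y)"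

lemma ancestral_expect_0: "ancestral_expect 0 x \<phi> = \<phi> (\<lambda>_. undefined)"
  by (simp add: ancestral_expect_def)

lemma ancestral_expect_cong:
  "(\<And>y. y \<in> PiE {..<m} A \<Longrightarrow> \<phi> y = \<psi> y) \<Longrightarrow> ancestral_expect m x \<phi> = ancestral_expect m x \<psi>"
  unfolding ancestral_expect_def by (intro sum.cong refl) simp

lemma sum_ancestral_expect:
  "(\<Sum>u\<in>U. \<psi> u * ancestral_expect m x (\<phi> u)) = ancestral_expect m x (\<lambda>y. \<Sum>u\<in>U. \<psi> u * \<phi> u y)"
  unfolding ancestral_expect_def by (simp add: sum_distrib_left mult.left_commute) (rule sum.swap)

lemma ancestral_expect_nonneg:
  assumes "m \<le> n" "\<And>y. y \<in> PiE {..<m} A \<Longrightarrow> 0 \<le> \<phi> y"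
  shows "0 \<le> ancestral_expect m x \<phi>"
  unfolding ancestral_expect_def
proof (intro sum_nonneg mult_nonneg_nonneg prod_nonneg node_kernel_nonneg assms(2))
  fix y v assume "y \<in> PiE {..<m} A" "v \<in> {..<m}"
  thus "v < n" "restrict y (pa v) \<in> PiE (pa v) A" "y v \<in> A v"
    using assms(1) parent_config[of y m v] by auto
qed

lemma ancestral_expect_Suc:
  assumes "m < n"
  shows "ancestral_expect (Suc m) x \<phi>
    = ancestral_expect m x (\<lambda>g. \<Sum>a\<in>A m. node_kernel x m (restrict g (pa m)) a * \<phi> (g(m := a)))"
proof -
  have restr: "restrict (g(m := a)) (pa v) = restrict g (pa v)" if "v \<le> m" for g :: "nat \<Rightarrow> 'a" and a v
    using parents_less[of v] that assms by (intro restrict_fupd) auto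
  have weight: "(\<Prod>v\<in>insert m {..<m}. node_kernel x v (restrict (g(m := a)) (pa v)) ((g(m := a)) v))
      = node_kernel x m (restrict g (pa m)) a * (\<Prod>v<m. node_kernel x v (restrict g (pa v)) (g v))" for g a
  proof -
    have "(\<Prod>v<m. node_kernel x v (restrict (g(m := a)) (pa v)) ((g(m := a)) v))
        = (\<Prod>v<m. node_kernel x v (restrict g (pa v)) (g v))"
      by (rule prod.cong) (auto simp: restr)
    thus ?thesis by (simp add: restr)
  qed
  have "ancestral_expect (Suc m) x \<phi> = (\<Sum>a\<in>A m. \<Sum>g\<in>PiE {..<m} A.
      (\<Prod>v\<in>insert m {..<m}. node_kernel x v (restrict (g(m := a)) (pa v)) ((g(m := a)) v)) * \<phi> (g(m := a)))"
    unfolding ancestral_expect_def lessThan_Suc by (rule sum_PiE_insert) simp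
  also have "\<dots> = ancestral_expect m x (\<lambda>g. \<Sum>a\<in>A m. node_kernel x m (restrict g (pa m)) a * \<phi> (g(m := a)))"
    unfolding weight ancestral_expect_def
    by (subst sum.swap) (simp add: sum_distrib_left mult.left_commute mult.assoc)
  finally show ?thesis .
qed

lemma ancestral_expect_truncate:
  assumes "S \<subseteq> {..<m}" "m \<le> k" "k \<le> n" "x \<in> A X"
  shows "ancestral_expect k x (\<lambda>y. \<phi> (restrict y S)) = ancestral_expect m x (\<lambda>y. \<phi> (restrict y S))"
  using assms(2,3)
proof (induction rule: dec_induct)
  case (step j)
  have "j < n" "j \<notin> S" using step.hyps assms(1,3) by auto
  have "ancestral_expect (Suc j) x (\<lambda>y. \<phi> (restrict y S))
      = ancestral_expect j x (\<lambda>g. \<phi> (restrict g S) * (\<Sum>a\<in>A j. node_kernel x j (restrict g (pa j)) a))"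
    unfolding ancestral_expect_Suc[OF \<open>j < n\<close>] restrict_fupd[OF \<open>j \<notin> S\<close>]
    by (simp add: sum_distrib_left mult.commute)
  also have "\<dots> = ancestral_expect j x (\<lambda>y. \<phi> (restrict y S))"
  proof (rule ancestral_expect_cong)
    fix g assume "g \<in> PiE {..<j} A"
    hence "restrict g (pa j) \<in> PiE (pa j) A" using \<open>j < n\<close> by (intro parent_config) auto
    thus "\<phi> (restrict g S) * (\<Sum>a\<in>A j. node_kernel x j (restrict g (pa j)) a) = \<phi> (restrict g S)"
      using \<open>j < n\<close> assms(4) by (simp add: sum_node_kernel)
  qed
  also have "\<dots> = ancestral_expect m x (\<lambda>y. \<phi> (restrict y S))"
    using step.IH \<open>j < n\<close> by (simp add: restrict_def)
  finally show ?case .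
qed simp

lemma bn_marg_eq_ancestral_expect:
  assumes "S \<subseteq> {..<m}" "m \<le> n" "x \<in> A X"
  shows "marg S x u = ancestral_expect m x (\<lambda>y. of_bool (restrict y S = u))"
proof -
  have weight: "(\<Prod>v<n. node_kernel x v (restrict y (pa v)) (y v)) = of_bool (y X = x) * bn_joint n X pa K y"
    for y
  proof -
    have "(\<Prod>v<n. node_kernel x v (restrict y (pa v)) (y v))
        = node_kernel x X (restrict y (pa X)) (y X) * (\<Prod>v\<in>{..<n} - {X}. node_kernel x v (restrict y (pa v)) (y v))"
      using source_less by (simp add: prod.remove)
    moreover have "(\<Prod>v\<in>{..<n} - {X}. node_kernel x v (restrict y (pa v)) (y v)) = bn_joint n X pa K y"
      unfolding bn_joint_def by (rule prod.cong) (auto simp: node_kernel_def)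
    moreover have "node_kernel x X c a = of_bool (a = x)" for c a by (simp add: node_kernel_def)
    ultimately show ?thesis by simp
  qed
  have "marg S x u = ancestral_expect n x (\<lambda>y. of_bool (restrict y S = u))"
    unfolding bn_marg_def ancestral_expect_def weight using finite_configs[of "{..<n}"]
    by (simp add: Collect_conj_eq Int_ac)
  also have "\<dots> = ancestral_expect m x (\<lambda>y. of_bool (restrict y S = u))"
    using ancestral_expect_truncate[of S m n x "\<lambda>c. of_bool (c = u)"] assms by simp
  finally show ?thesis .
qed

lemma bn_marg_nonneg: "V \<subseteq> {..<n} \<Longrightarrow> x \<in> A X \<Longrightarrow> 0 \<le> marg V x z"
  by (simp add: bn_marg_eq_ancestral_expect[of V n] ancestral_expect_nonneg)

lemma sum_bn_marg_weighted:
  assumes "S \<subseteq> {..<m}" "m \<le> n" "x \<in> A X"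
  shows "(\<Sum>u\<in>PiE S A. \<psi> u * marg S x u) = ancestral_expect m x (\<lambda>y. \<psi> (restrict y S))"
proof -
  have "(\<Sum>u\<in>PiE S A. \<psi> u * marg S x u)
      = ancestral_expect m x (\<lambda>y. \<Sum>u\<in>PiE S A. \<psi> u * of_bool (restrict y S = u))"
    using assms by (simp add: bn_marg_eq_ancestral_expect sum_ancestral_expect)
  also have "\<dots> = ancestral_expect m x (\<lambda>y. \<psi> (restrict y S))"
  proof (rule ancestral_expect_cong)
    fix y assume "y \<in> PiE {..<m} A"
    hence "restrict y S \<in> PiE S A" using assms(1) by (rule restrict_config)
    moreover have "finite (PiE S A)" using assms(1,2) by (intro finite_configs) auto
    ultimately show "(\<Sum>u\<in>PiE S A. \<psi> u * of_bool (restrict y S = u)) = \<psi> (restrict y S)"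
      by simp
  qed
  finally show ?thesis .
qed

lemma sum_bn_marg:
  assumes "V \<subseteq> {..<n}" "x \<in> A X"
  shows "sum (marg V x) (PiE V A) = 1"
proof -
  have "sum (marg V x) (PiE V A) = ancestral_expect n x (\<lambda>_. 1)"
    using sum_bn_marg_weighted[of V n x "\<lambda>_. 1"] assms by simp
  also have "\<dots> = ancestral_expect 0 x (\<lambda>_. 1)"
    using ancestral_expect_truncate[of "{}" 0 n x "\<lambda>_. 1"] assms by simp
  finally show ?thesis by (simp add: ancestral_expect_0)
qed

lemma bn_marg_restrict:
  assumes "V \<subseteq> V'" "V' \<subseteq> {..<n}" "x \<in> A X"
  shows "marg V x c = (\<Sum>u | u \<in> PiE V' A \<and> restrict u V = c. marg V' x u)"
proof -
  have "(\<Sum>u | u \<in> PiE V' A \<and> restrict u V = c. marg V' x u)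
      = (\<Sum>u\<in>PiE V' A. of_bool (restrict u V = c) * marg V' x u)"
    using finite_configs[OF assms(2)] by (simp add: Collect_conj_eq)
  also have "\<dots> = ancestral_expect n x (\<lambda>y. of_bool (restrict y V = c))"
    using sum_bn_marg_weighted[of V' n x] assms by (simp add: Int_absorb1)
  finally show ?thesis using assms by (simp add: bn_marg_eq_ancestral_expect[of V n])
qed

lemma bn_marg_insert:
  assumes W: "W < n" "W \<noteq> X" and V: "\<forall>v\<in>V. v < W"
    and x: "x \<in> A X" and z: "z \<in> PiE (insert W V) A"
  shows "marg (insert W V) x z = (\<Sum>u | u \<in> PiE (V \<union> pa W) A \<and> restrict u V = restrict z V.
                                    marg (V \<union> pa W) x u * K W (restrict u (pa W)) (z W))"
proof -
  have "W \<notin> V" using V by auto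
  have parents: "V \<union> pa W \<subseteq> {..<W}" using V parents_less[OF W(1)] by auto
  have "marg (insert W V) x z = ancestral_expect (Suc W) x (\<lambda>y. of_bool (restrict y (insert W V) = z))"
    using V W x by (intro bn_marg_eq_ancestral_expect) auto
  also have "\<dots> = ancestral_expect W x
      (\<lambda>g. of_bool (restrict g V = restrict z V) * K W (restrict g (pa W)) (z W))"
    unfolding ancestral_expect_Suc[OF W(1)]
  proof (rule ancestral_expect_cong)
    fix g :: "nat \<Rightarrow> 'a"
    have "(\<Sum>a\<in>A W. node_kernel x W (restrict g (pa W)) a * of_bool (restrict (g(W := a)) (insert W V) = z))
        = (\<Sum>a\<in>A W. of_bool (restrict g V = restrict z V) * (if a = z W then K W (restrict g (pa W)) a else 0))"
      unfolding restrict_insert_eq_iff[OF z \<open>W \<notin> V\<close>] using W(2) by (intro sum.cong refl) (simp add: node_kernel_def)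
    also have "\<dots> = of_bool (restrict g V = restrict z V) * K W (restrict g (pa W)) (z W)"
      using z finite_alphabet[OF W(1)] by (simp add: PiE_mem flip: sum_distrib_left)
    finally show "(\<Sum>a\<in>A W. node_kernel x W (restrict g (pa W)) a * of_bool (restrict (g(W := a)) (insert W V) = z))
        = of_bool (restrict g V = restrict z V) * K W (restrict g (pa W)) (z W)" .
  qed
  also have "\<dots> = (\<Sum>u\<in>PiE (V \<union> pa W) A.
      of_bool (restrict u V = restrict z V) * K W (restrict u (pa W)) (z W) * marg (V \<union> pa W) x u)"
    using sum_bn_marg_weighted[OF parents _ x] W(1) by (simp add: Un_Int_eq)
  also have "\<dots> = (\<Sum>u | u \<in> PiE (V \<union> pa W) A \<and> restrict u V = restrict z V.
                    marg (V \<union> pa W) x u * K W (restrict u (pa W)) (z W))"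
  proof -
    have fin: "finite (PiE (V \<union> pa W) A)" using parents W(1) by (intro finite_configs) auto
    show ?thesis unfolding sum.inter_filter[OF fin] by (intro sum.cong refl) simp
  qed
  finally show ?thesis .
qed

lemma kernel_l1_le_node_eta:
  assumes "v < n" "v \<noteq> X" "c \<in> PiE (pa v) A" "c' \<in> PiE (pa v) A"
  shows "(\<Sum>a\<in>A v. \<bar>K v c a - K v c' a\<bar>) \<le> 2 * eta_node v"
proof -
  have "tv_dist (A v) (K v c) (K v c') = (\<Sum>a\<in>A v. \<bar>K v c a - K v c' a\<bar>) / 2"
    using assms by (simp add: tv_dist_eq_half_l1 finite_alphabet sum_kernel)
  moreover have "tv_dist (A v) (K v c) (K v c') \<le> eta_node v"
    unfolding node_eta_def using assms parents_less[OF assms(1)]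
    by (intro tv_dist_le_dobrushin finite_configs) auto
  ultimately show ?thesis by simp
qed

lemma tv_dist_bn_marg:
  assumes "V \<subseteq> {..<n}" "x \<in> A X" "x' \<in> A X"
  shows "tv_dist (PiE V A) (marg V x) (marg V x') = (\<Sum>z\<in>PiE V A. \<bar>marg V x z - marg V x' z\<bar>) / 2"
  using assms by (simp add: tv_dist_eq_half_l1 finite_configs sum_bn_marg)

lemma tv_dist_bn_marg_insert_le:
  assumes W: "W < n" "W \<noteq> X" and V: "\<forall>v\<in>V. v < W" and x: "x \<in> A X" "x' \<in> A X"
  shows "tv_dist (PiE (insert W V) A) (marg (insert W V) x) (marg (insert W V) x')
    \<le> eta_node W * tv_dist (PiE (V \<union> pa W) A) (marg (V \<union> pa W) x) (marg (V \<union> pa W) x')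
      + (1 - eta_node W) * tv_dist (PiE V A) (marg V x) (marg V x')"
proof -
  define B where "B = PiE (V \<union> pa W) A"
  define f where "f u = marg (V \<union> pa W) x u - marg (V \<union> pa W) x' u" for u
  define L where "L u = K W (restrict u (pa W))" for u
  define fiber where "fiber c = {u \<in> B. restrict u V = c}" for c
  have "W \<notin> V" using V by auto
  have sub: "V \<subseteq> {..<n}" "insert W V \<subseteq> {..<n}" "V \<union> pa W \<subseteq> {..<n}"
    using V W parents_less[OF W(1)] by auto
  have parent: "restrict u (pa W) \<in> PiE (pa W) A" if "u \<in> B" for u
    using that unfolding B_def by (rule restrict_config) auto
  have "(\<Sum>z\<in>PiE (insert W V) A. \<bar>marg (insert W V) x z - marg (insert W V) x' z\<bar>)
      = (\<Sum>z\<in>PiE (insert W V) A. \<bar>\<Sum>u\<in>fiber (restrict z V). f u * L u (z W)\<bar>)"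
    using W V x
    by (intro sum.cong refl) (simp add: bn_marg_insert fiber_def B_def f_def L_def sum_subtractf left_diff_distrib)
  also have "\<dots> = (\<Sum>c\<in>PiE V A. \<Sum>w\<in>A W. \<bar>\<Sum>u\<in>fiber c. f u * L u w\<bar>)"
    using \<open>W \<notin> V\<close> by (rule sum_PiE_insert_restrict)
  also have "\<dots> \<le> eta_node W * (\<Sum>u\<in>B. \<bar>f u\<bar>) + (1 - eta_node W) * (\<Sum>c\<in>PiE V A. \<bar>\<Sum>u\<in>fiber c. f u\<bar>)"
    unfolding fiber_def
  proof (rule fibred_kernel_contraction)
    show "finite B" "finite (PiE V A)" using sub by (auto simp: B_def finite_configs)
    show "(\<lambda>u. restrict u V) ` B \<subseteq> PiE V A" unfolding B_def by (auto intro: restrict_config)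
    fix u u' w assume "u \<in> B" "u' \<in> B"
    thus "sum (L u) (A W) = 1" "(\<Sum>w\<in>A W. \<bar>L u w - L u' w\<bar>) \<le> 2 * eta_node W"
      using W parent by (simp_all add: L_def sum_kernel kernel_l1_le_node_eta)
    assume "w \<in> A W"
    thus "0 \<le> L u w" using W parent \<open>u \<in> B\<close> by (simp add: L_def kernel_nonneg)
  qed
  also have "(\<Sum>c\<in>PiE V A. \<bar>\<Sum>u\<in>fiber c. f u\<bar>) = (\<Sum>c\<in>PiE V A. \<bar>marg V x c - marg V x' c\<bar>)"
    using sub x by (intro sum.cong refl) (simp add: fiber_def B_def f_def sum_subtractf bn_marg_restrict[of V "V \<union> pa W"])
  finally show ?thesis using sub x by (simp add: tv_dist_bn_marg B_def f_def)
qed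

lemma node_eta_bounds:
  assumes "v < n" "v \<noteq> X"
  shows "0 \<le> eta_node v" "eta_node v \<le> 1"
proof -
  have "pa v \<subseteq> {..<n}" using parents_less[OF assms(1)] assms(1) by auto
  thus "0 \<le> eta_node v" "eta_node v \<le> 1"
    unfolding node_eta_def using assms
    by (intro dobrushin_pmf_bounds finite_configs configs_nonempty finite_alphabet kernel_nonneg sum_kernel;
        simp)+
qed

lemma bn_eta_bounds:
  assumes "V \<subseteq> {..<n}"
  shows "0 \<le> eta V" "eta V \<le> 1"
  unfolding bn_eta_def using assms source_less
  by (intro dobrushin_pmf_bounds finite_configs finite_alphabet alphabet_nonempty bn_marg_nonneg sum_bn_marg;
      simp)+

lemma bn_eta_empty: "eta {} = 0"
proof -
  have "eta {} \<le> 0" unfolding bn_eta_def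
  proof (rule dobrushin_leI)
    show "A X \<noteq> {}" using alphabet_nonempty source_less by simp
    fix x x' assume "x \<in> A X" "x' \<in> A X"
    thus "tv_dist (PiE {} A) (marg {} x) (marg {} x') \<le> 0"
      using sum_bn_marg[of "{}"] tv_dist_bn_marg[of "{}" x x'] by simp
  qed
  thus ?thesis using bn_eta_bounds[of "{}"] by simp
qed

lemma bn_eta_insert_le:
  assumes W: "W < n" "W \<noteq> X" and V: "\<forall>v\<in>V. v < W"
  shows "eta (insert W V) \<le> (1 - eta_node W) * eta V + eta_node W * eta (V \<union> pa W)"
  unfolding bn_eta_def
proof (rule dobrushin_leI)
  show "A X \<noteq> {}" using alphabet_nonempty source_less by simp
  have fin: "finite (A X)" using finite_alphabet source_less by simp
  fix x x' assume x: "x \<in> A X" "x' \<in> A X"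
  let ?tv = "\<lambda>S. tv_dist (PiE S A) (marg S x) (marg S x')"
  let ?dob = "\<lambda>S. dobrushin (A X) (PiE S A) (marg S)"
  have "?tv S \<le> ?dob S" for S using fin x by (intro tv_dist_le_dobrushin)
  hence "eta_node W * ?tv (V \<union> pa W) \<le> eta_node W * ?dob (V \<union> pa W)"
    and "(1 - eta_node W) * ?tv V \<le> (1 - eta_node W) * ?dob V"
    using node_eta_bounds[OF W(1,2)] by (simp_all add: mult_left_mono)
  with tv_dist_bn_marg_insert_le[OF W V x]
  show "?tv (insert W V) \<le> (1 - eta_node W) * ?dob V + eta_node W * ?dob (V \<union> pa W)"
    by linarith
qed

abbreviation kept_edges where "kept_edges S \<equiv> perc_edges pa X S"

definition reaches :: "nat set \<Rightarrow> nat set \<Rightarrow> bool" where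
  "reaches S V \<longleftrightarrow> (\<exists>v\<in>V. (X, v) \<in> (kept_edges S)\<^sup>*)"

lemma kept_edge_less: "(a, b) \<in> kept_edges S \<Longrightarrow> S \<subseteq> {..<n} \<Longrightarrow> a < b \<and> b \<in> S"
  unfolding perc_edges_def using parents_less by auto

lemma path_from_source_kept: "(X, u) \<in> (kept_edges S)\<^sup>* \<Longrightarrow> u = X \<or> u \<in> S"
  by (erule rtranclE) (auto simp: perc_edges_def)

lemma path_from_source_truncate:
  assumes "(X, b) \<in> (kept_edges S)\<^sup>*" "S \<subseteq> {..<n}" "b \<le> t"
  shows "(X, b) \<in> (kept_edges (S \<inter> {..t}))\<^sup>*"
  using assms
proof (induction rule: rtrancl_induct)
  case (step a b)
  have "a < b" "b \<in> S" using kept_edge_less[OF step.hyps(2) step.prems(1)] by auto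
  hence "(X, a) \<in> (kept_edges (S \<inter> {..t}))\<^sup>*" using step by auto
  moreover have "(a, b) \<in> kept_edges (S \<inter> {..t})"
    using step.hyps(2) \<open>a < b\<close> \<open>b \<in> S\<close> step.prems(2) unfolding perc_edges_def by auto
  ultimately show ?case by (rule rtrancl_into_rtrancl)
qed simp

lemma path_from_source_mono: "S \<subseteq> S' \<Longrightarrow> (X, b) \<in> (kept_edges S)\<^sup>* \<Longrightarrow> (X, b) \<in> (kept_edges S')\<^sup>*"
  by (rule rtrancl_mono[THEN subsetD, rotated]) (auto simp: perc_edges_def)

lemma path_from_source_cong:
  assumes "S \<subseteq> {..<n}" "S' \<subseteq> {..<n}" "S \<inter> {..t} = S' \<inter> {..t}" "b \<le> t"
  shows "(X, b) \<in> (kept_edges S)\<^sup>* \<longleftrightarrow> (X, b) \<in> (kept_edges S')\<^sup>*"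
  using path_from_source_truncate[where b = b and t = t] path_from_source_mono[of "S \<inter> {..t}"]
    path_from_source_mono[of "S' \<inter> {..t}"] assms by (metis inf_le1)

lemma path_from_source_to_node:
  assumes "W \<noteq> X"
  shows "(X, W) \<in> (kept_edges S)\<^sup>* \<longleftrightarrow> W \<in> S \<and> (\<exists>u\<in>pa W. (X, u) \<in> (kept_edges S)\<^sup>*)"
proof
  assume "(X, W) \<in> (kept_edges S)\<^sup>*"
  then show "W \<in> S \<and> (\<exists>u\<in>pa W. (X, u) \<in> (kept_edges S)\<^sup>*)"
    using assms by (cases rule: rtranclE) (auto simp: perc_edges_def)
next
  assume "W \<in> S \<and> (\<exists>u\<in>pa W. (X, u) \<in> (kept_edges S)\<^sup>*)"
  then obtain u where u: "W \<in> S" "u \<in> pa W" "(X, u) \<in> (kept_edges S)\<^sup>*" by blast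
  hence "(u, W) \<in> kept_edges S" using path_from_source_kept[OF u(3)] unfolding perc_edges_def by auto
  with u(3) show "(X, W) \<in> (kept_edges S)\<^sup>*" by (rule rtrancl_into_rtrancl)
qed

lemma perc_eq_bernoulli:
  "perc n X pa q V
    = (\<Sum>S\<in>Pow ({..<n} - {X}). bernoulli_weight ({..<n} - {X}) q S * of_bool (reaches S V))"
  unfolding perc_def bernoulli_weight_def reaches_def of_bool_def ..

lemma perc_source: "X \<in> V \<Longrightarrow> perc n X pa q V = 1"
  by (simp add: perc_eq_bernoulli reaches_def sum_bernoulli_weight bexI[of _ X])

lemma perc_nonneg:
  assumes "\<And>v. v < n \<Longrightarrow> v \<noteq> X \<Longrightarrow> 0 \<le> q v \<and> q v \<le> 1"
  shows "0 \<le> perc n X pa q V"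
  unfolding perc_eq_bernoulli bernoulli_weight_def
  using assms by (intro sum_nonneg mult_nonneg_nonneg prod_nonneg) auto

lemma reaches_insert_above:
  assumes "T \<subseteq> {..<n}" "W < n" "\<forall>v\<in>V. v < W"
  shows "reaches (insert W T) V \<longleftrightarrow> reaches T V"
proof -
  have "(X, v) \<in> (kept_edges (insert W T))\<^sup>* \<longleftrightarrow> (X, v) \<in> (kept_edges T)\<^sup>*" if "v < W" for v
    using assms(1,2) that by (intro path_from_source_cong[where t = v]) auto
  thus ?thesis using assms(3) unfolding reaches_def by auto
qed

lemma reaches_insert_removed: "W \<notin> T \<Longrightarrow> W \<noteq> X \<Longrightarrow> reaches T (insert W V) \<longleftrightarrow> reaches T V"
  using path_from_source_kept[of W T] unfolding reaches_def by auto

lemma reaches_insert_kept: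
  assumes "T \<subseteq> {..<n}" "W < n" "W \<noteq> X" "\<forall>v\<in>V. v < W"
  shows "reaches (insert W T) (insert W V) \<longleftrightarrow> reaches T (V \<union> pa W)"
proof -
  have "\<forall>v\<in>V \<union> pa W. v < W" using assms(4) parents_less[OF assms(2)] by auto
  hence "reaches (insert W T) (V \<union> pa W) \<longleftrightarrow> reaches T (V \<union> pa W)"
    using assms(1,2) by (intro reaches_insert_above)
  moreover have "(X, W) \<in> (kept_edges (insert W T))\<^sup>* \<longleftrightarrow> reaches (insert W T) (pa W)"
    unfolding path_from_source_to_node[OF assms(3)] reaches_def by simp
  ultimately show ?thesis unfolding reaches_def by blast
qed

text \<open>Condition on whether the highest node \<open>W\<close> is kept.\<close>

lemma perc_insert:
  assumes W: "W < n" "W \<noteq> X" and V: "\<forall>v\<in>V. v < W"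
  shows "perc n X pa q (insert W V) = (1 - q W) * perc n X pa q V + q W * perc n X pa q (V \<union> pa W)"
proof -
  define U where "U = {..<n} - {X} - {W}"
  define wt where "wt = bernoulli_weight U q"
  have split: "perc n X pa q V' = (\<Sum>T\<in>Pow U.
      wt T * ((1 - q W) * of_bool (reaches T V') + q W * of_bool (reaches (insert W T) V')))" for V'
    unfolding perc_eq_bernoulli U_def wt_def using W by (intro sum_bernoulli_weight_split) auto
  have T: "T \<subseteq> {..<n}" "W \<notin> T" if "T \<in> Pow U" for T using that by (auto simp: U_def)
  have unaffected: "perc n X pa q V' = (\<Sum>T\<in>Pow U. wt T * of_bool (reaches T V'))"
    if "\<forall>v\<in>V'. v < W" for V'
    unfolding split using T W(1) that by (intro sum.cong refl) (simp add: reaches_insert_above algebra_simps)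
  have "\<forall>v\<in>V \<union> pa W. v < W" using V parents_less[OF W(1)] by auto
  hence "perc n X pa q V = (\<Sum>T\<in>Pow U. wt T * of_bool (reaches T V))"
    and "perc n X pa q (V \<union> pa W) = (\<Sum>T\<in>Pow U. wt T * of_bool (reaches T (V \<union> pa W)))"
    using V by (simp_all add: unaffected)
  moreover have "perc n X pa q (insert W V) = (\<Sum>T\<in>Pow U.
      (1 - q W) * (wt T * of_bool (reaches T V)) + q W * (wt T * of_bool (reaches T (V \<union> pa W))))"
    unfolding split using T W V
    by (intro sum.cong refl) (simp add: reaches_insert_removed reaches_insert_kept algebra_simps)
  ultimately show ?thesis by (simp add: sum.distrib sum_distrib_left)
qed

lemma bn_eta_le_perc:
  assumes "V \<subseteq> {..<n}"
  shows "eta V \<le> perc n X pa eta_node V"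
proof -
  have "finite V" using assms finite_subset by blast
  thus ?thesis using assms
  proof (induction V rule: nat_set_induct_max)
    case empty
    show ?case using perc_nonneg[of eta_node "{}"] node_eta_bounds by (simp add: bn_eta_empty)
  next
    case (insert_max W V)
    show ?case
    proof (cases "W = X")
      case True
      thus ?thesis using perc_source bn_eta_bounds[OF insert_max.prems] by simp
    next
      case False
      have W: "W < n" and V: "V \<subseteq> {..<W}" "V \<union> pa W \<subseteq> {..<W}"
        using insert_max parents_less[of W] by auto
      have "eta (insert W V) \<le> (1 - eta_node W) * eta V + eta_node W * eta (V \<union> pa W)"
        using W False insert_max.hyps(1) by (rule bn_eta_insert_le)
      also have "\<dots> \<le> (1 - eta_node W) * perc n X pa eta_node V + eta_node W * perc n X pa eta_node (V \<union> pa W)"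
      proof (intro add_mono mult_left_mono)
        show "eta V \<le> perc n X pa eta_node V" "eta (V \<union> pa W) \<le> perc n X pa eta_node (V \<union> pa W)"
          by (rule insert_max.IH; use V W in auto)+
      qed (use node_eta_bounds[OF W False] in auto)
      also have "\<dots> = perc n X pa eta_node (insert W V)"
        using W False insert_max.hyps(1) by (rule perc_insert[symmetric])
      finally show ?thesis .
    qed
  qed
qed

lemma bn_eta_less_1:
  assumes "\<forall>v<n. v \<noteq> X \<longrightarrow> eta_node v < 1" and "V \<subseteq> {..<n}" "X \<notin> V"
  shows "eta V < 1"
proof -
  have "finite V" using assms(2) finite_subset by blast
  thus ?thesis using assms(2,3)
  proof (induction V rule: nat_set_induct_max)
    case empty
    show ?case by (simp add: bn_eta_empty)
  next
    case (insert_max W V)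
    have W: "W < n" "W \<noteq> X" and V: "V \<subseteq> {..<W}" "V \<union> pa W \<subseteq> {..<n}"
      using insert_max parents_less[of W] by auto
    have "eta (insert W V) \<le> (1 - eta_node W) * eta V + eta_node W * eta (V \<union> pa W)"
      using W insert_max.hyps(1) by (rule bn_eta_insert_le)
    also have "\<dots> < (1 - eta_node W) * 1 + eta_node W * 1"
      using insert_max V W assms(1) node_eta_bounds[OF W] bn_eta_bounds[OF V(2)]
      by (intro add_less_le_mono mult_strict_left_mono mult_left_mono) auto
    finally show ?case by simp
  qed
qed

end

theorem theorem6:
  fixes n X :: nat and pa :: "nat \<Rightarrow> nat set" and A :: "nat \<Rightarrow> 'a set"
    and K :: "nat \<Rightarrow> (nat \<Rightarrow> 'a) \<Rightarrow> 'a \<Rightarrow> real"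
  assumes bn: "bayes_net n X pa A K"
  shows
    "(\<forall>W V. V \<subseteq> {..<n} \<longrightarrow> W < n \<longrightarrow> W \<notin> V \<longrightarrow> W \<noteq> X \<longrightarrow> (\<forall>v\<in>V. v < W) \<longrightarrow>
        bn_eta n X pa A K (V \<union> {W})
          \<le> (1 - node_eta pa A K W) * bn_eta n X pa A K V
            + node_eta pa A K W * bn_eta n X pa A K (V \<union> pa W))
     \<and> (\<forall>V. V \<subseteq> {..<n} \<longrightarrow> bn_eta n X pa A K V \<le> perc n X pa (node_eta pa A K) V)
     \<and> ((\<forall>v<n. v \<noteq> X \<longrightarrow> node_eta pa A K v < 1) \<longrightarrow>
          (\<forall>V. V \<subseteq> {..<n} \<longrightarrow> X \<notin> V \<longrightarrow> bn_eta n X pa A K V < 1))"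
proof -
  interpret bayes_network n X pa A K by (rule bayes_network.intro) (rule bn)
  show ?thesis by (auto intro: bn_eta_insert_le bn_eta_le_perc bn_eta_less_1)
qed

end
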